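(* Let $K$ be a random string in $\{0,1\}^N$ (with arbitrary distribution), and let $p_1,\dots,p_d\in\{1,\dots,N\}$ be fixed probes. Let $c'$ be a Bernoulli$(1/2)$ random variable and for $S\subseteq\{1,\dots,d\}$ define $c(S) := \bigoplus_{i\in S} K[p_i]$ and $d(S) := \|\mathcal L(c(S)) - \mathcal L(c')\|_{TV}$. If $\mathcal S$ is a uniformly random subset of $\{1,\dots,d\}$, then \[ \mathbb E\big[d(\mathcal S)\big] \le \frac12\sqrt{\sum_{y\in\{0,1\}^d}\mathbb P\big((K[p_1],\dots,K[p_d]) = y\big)^2}. \]
   Context: $K[i]$ denotes the $i$-th bit of $K$. For probability distributions $\mu,\nu$ on a finite set $\Omega$, $\|\mu-\nu\|_{TV} = \frac12\sum_{x\in\Omega}|\mu(x)-\nu(x)|$; $\mathcal L(Z)$ is the law of $Z$. *)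

theory Defs
  imports "HOL-Probability.Probability"
begin

definition tv_dist :: "'a::finite pmf \<Rightarrow> 'a pmf \<Rightarrow> real" where
  "tv_dist \<mu> \<nu> = (1/2) * (\<Sum>x\<in>UNIV. \<bar>pmf \<mu> x - pmf \<nu> x\<bar>)"

text \<open>Bit i (1-based) of a string k in {0,1}^N, represented as a bool list of length N.\<close>
definition bit_at :: "bool list \<Rightarrow> nat \<Rightarrow> bool" where
  "bit_at k i = k ! (i - 1)"

definition xor_set :: "nat set \<Rightarrow> (nat \<Rightarrow> bool) \<Rightarrow> bool" where
  "xor_set S f = odd (card {i\<in>S. f i})"

definition cS :: "(nat \<Rightarrow> nat) \<Rightarrow> nat set \<Rightarrow> bool list \<Rightarrow> bool" where
  "cS p S k = xor_set S (\<lambda>i. bit_at k (p i))"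

definition dS :: "bool list pmf \<Rightarrow> (nat \<Rightarrow> nat) \<Rightarrow> nat set \<Rightarrow> real" where
  "dS K p S = tv_dist (map_pmf (cS p S) K) (bernoulli_pmf (1/2))"

definition probe_vec :: "(nat \<Rightarrow> nat) \<Rightarrow> nat \<Rightarrow> bool list \<Rightarrow> bool list" where
  "probe_vec p d k = map (\<lambda>i. bit_at k (p i)) [1..<d+1]"

end

theory Submission
  imports Defs
begin

text \<open>Let \<open>Q\<close> be the law of the probe vector. For \<open>S \<subseteq> {1..d}\<close> the law of \<open>c(S)\<close> is
  a Bernoulli distribution whose bias \<open>P(c(S) = 0) - P(c(S) = 1)\<close> is the Walsh coefficient
  \<open>Q^(S) = \<Sum>\<^sub>y Q(y) \<chi>\<^sub>S(y)\<close>, so \<open>d(S) = |Q^(S)| / 2\<close>. The characters \<open>\<chi>\<^sub>S\<close> are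
  orthogonal, which gives Parseval's identity \<open>\<Sum>\<^sub>S Q^(S)\<^sup>2 = 2\<^sup>d \<Sum>\<^sub>y Q(y)\<^sup>2\<close>, and the
  Cauchy-Schwarz inequality bounds the mean of \<open>|Q^(S)|\<close> by the root mean square.\<close>

lemma finite_bool_lists_length_eq [simp]: "finite {ys :: bool list. length ys = d}"
  using finite_lists_length_eq[of "UNIV :: bool set" d] by simp

lemma sum_Pow_prod:
  fixes g :: "'a \<Rightarrow> 'b::comm_semiring_1"
  assumes "finite A"
  shows "(\<Sum>S\<in>Pow A. \<Prod>i\<in>S. g i) = (\<Prod>i\<in>A. g i + 1)"
  using prod_add[OF assms, of g "\<lambda>_. 1"] by simp

lemma mean_abs_le_sqrt_mean_square:
  fixes f :: "'a \<Rightarrow> real"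
  assumes "finite A" "A \<noteq> {}"
  shows "(\<Sum>x\<in>A. \<bar>f x\<bar>) / card A \<le> sqrt ((\<Sum>x\<in>A. (f x)\<^sup>2) / card A)"
proof (rule real_le_rsqrt)
  have "card A > 0"
    using assms by (simp add: card_gt_0_iff)
  have "(\<Sum>x\<in>A. \<bar>f x\<bar> * 1)\<^sup>2 \<le> (\<Sum>x\<in>A. \<bar>f x\<bar>\<^sup>2) * (\<Sum>x\<in>A. 1\<^sup>2)"
    by (rule Cauchy_Schwarz_ineq_sum)
  then show "((\<Sum>x\<in>A. \<bar>f x\<bar>) / card A)\<^sup>2 \<le> (\<Sum>x\<in>A. (f x)\<^sup>2) / card A"
    using \<open>card A > 0\<close> by (simp add: power_divide field_simps power2_eq_square)
qed

lemma pmf_False_minus_True: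
  "pmf M False - pmf M True = measure_pmf.expectation M (\<lambda>b. if b then -1 else 1 :: real)"
  by (subst integral_measure_pmf_real[of UNIV]) (auto simp: UNIV_bool)

lemma tv_dist_bernoulli_half:
  "tv_dist M (bernoulli_pmf (1/2)) = \<bar>pmf M False - pmf M True\<bar> / 2"
  unfolding tv_dist_def by (auto simp: UNIV_bool pmf_False_conv_True abs_if)

definition parity_char :: "nat set \<Rightarrow> bool list \<Rightarrow> real" where
  "parity_char S y = (\<Prod>i\<in>S. if y ! (i - 1) then -1 else 1)"

definition walsh_coeff :: "nat \<Rightarrow> (bool list \<Rightarrow> real) \<Rightarrow> nat set \<Rightarrow> real" where
  "walsh_coeff d a S = (\<Sum>y\<in>{ys. length ys = d}. a y * parity_char S y)"

lemma parity_char_orthogonal: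
  assumes "length y = d" "length z = d"
  shows "(\<Sum>S\<in>Pow {1..d}. parity_char S y * parity_char S z) = (if y = z then 2 ^ d else 0)"
proof -
  define s where "s i = (if y ! (i - 1) then -1 else 1) * (if z ! (i - 1) then -1 else 1 :: real)"
    for i
  have "(\<Sum>S\<in>Pow {1..d}. parity_char S y * parity_char S z) = (\<Prod>i\<in>{1..d}. s i + 1)"
    unfolding parity_char_def s_def by (simp add: prod.distrib [symmetric] sum_Pow_prod)
  also have "\<dots> = (if y = z then 2 ^ d else 0)"
  proof (cases "y = z")
    case True
    then have "(\<Prod>i\<in>{1..d}. s i + 1) = (\<Prod>i\<in>{1..d}. 2)"
      by (intro prod.cong) (auto simp: s_def)
    then show ?thesis
      using True by simp
  next
    case False
    then obtain j where "j < d" "y ! j \<noteq> z ! j"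
      using assms nth_equalityI[of y z] by auto
    then have "Suc j \<in> {1..d}" "s (Suc j) + 1 = 0"
      by (auto simp: s_def)
    then show ?thesis
      using False by (metis finite_atLeastAtMost prod_zero_iff)
  qed
  finally show ?thesis .
qed

lemma parseval_walsh:
  "(\<Sum>S\<in>Pow {1..d}. (walsh_coeff d a S)\<^sup>2) = 2 ^ d * (\<Sum>y\<in>{ys. length ys = d}. (a y)\<^sup>2)"
proof -
  let ?Y = "{ys :: bool list. length ys = d}"
  have "(\<Sum>S\<in>Pow {1..d}. (walsh_coeff d a S)\<^sup>2)
      = (\<Sum>S\<in>Pow {1..d}. \<Sum>y\<in>?Y. \<Sum>z\<in>?Y. a y * a z * (parity_char S y * parity_char S z))"
    unfolding walsh_coeff_def by (simp add: power2_eq_square sum_product mult_ac)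
  also have "\<dots> = (\<Sum>y\<in>?Y. \<Sum>z\<in>?Y. a y * a z * (\<Sum>S\<in>Pow {1..d}. parity_char S y * parity_char S z))"
    unfolding sum_distrib_left by (subst sum.swap) (rule sum.cong[OF refl], rule sum.swap)
  also have "\<dots> = (\<Sum>y\<in>?Y. \<Sum>z\<in>?Y. a y * a z * (if y = z then 2 ^ d else 0))"
    by (intro sum.cong refl, subst parity_char_orthogonal) auto
  also have "\<dots> = 2 ^ d * (\<Sum>y\<in>?Y. (a y)\<^sup>2)"
    by (simp add: if_distrib sum.delta power2_eq_square sum_distrib_left mult_ac cong: if_cong)
  finally show ?thesis .
qed

lemma parity_char_xor_set:
  assumes "finite S"
  shows "parity_char S y = (if xor_set S (\<lambda>i. y ! (i - 1)) then -1 else 1)"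
proof -
  have "parity_char S y = (\<Prod>i\<in>{i\<in>S. y ! (i - 1)}. -1)"
    unfolding parity_char_def using assms by (simp add: prod.If_cases Int_def conj_commute)
  then show ?thesis
    unfolding xor_set_def by simp
qed

lemma walsh_coeff_pmf:
  assumes "set_pmf Q \<subseteq> {ys. length ys = d}"
  shows "walsh_coeff d (pmf Q) S = measure_pmf.expectation Q (parity_char S)"
  unfolding walsh_coeff_def using assms
  by (subst integral_measure_pmf_real[of "{ys. length ys = d}"]) (auto simp: mult.commute)

lemma cS_eq_xor_set_probe_vec:
  assumes "S \<subseteq> {1..d}"
  shows "cS p S k = xor_set S (\<lambda>i. probe_vec p d k ! (i - 1))"
proof -
  have "probe_vec p d k ! (i - 1) = bit_at k (p i)" if "i \<in> {1..d}" for i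
    unfolding probe_vec_def using that by (subst nth_map) (auto simp del: upt_Suc)
  then have "{i\<in>S. bit_at k (p i)} = {i\<in>S. probe_vec p d k ! (i - 1)}"
    using assms by auto
  then show ?thesis
    unfolding cS_def xor_set_def by simp
qed

lemma dS_eq_walsh_coeff:
  assumes "S \<subseteq> {1..d}"
  shows "dS K p S = \<bar>walsh_coeff d (pmf (map_pmf (probe_vec p d) K)) S\<bar> / 2"
proof -
  define Q where "Q = map_pmf (probe_vec p d) K"
  define h where "h y = xor_set S (\<lambda>i. y ! (i - 1))" for y
  have "finite S"
    using assms finite_subset by blast
  have "cS p S = h \<circ> probe_vec p d"
    by (simp add: fun_eq_iff h_def cS_eq_xor_set_probe_vec[OF assms])
  then have law: "map_pmf (cS p S) K = map_pmf h Q"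
    by (simp add: Q_def map_pmf_compose)
  have "walsh_coeff d (pmf Q) S = measure_pmf.expectation Q (parity_char S)"
    by (rule walsh_coeff_pmf) (auto simp: Q_def probe_vec_def)
  also have "\<dots> = measure_pmf.expectation (map_pmf h Q) (\<lambda>b. if b then -1 else 1)"
    by (simp add: parity_char_xor_set[OF \<open>finite S\<close>, abs_def] h_def)
  also have "\<dots> = pmf (map_pmf h Q) False - pmf (map_pmf h Q) True"
    by (rule pmf_False_minus_True [symmetric])
  finally show ?thesis
    unfolding dS_def law tv_dist_bernoulli_half Q_def by simp
qed

theorem corollary1:
  fixes K :: "bool list pmf" and N d :: nat and p :: "nat \<Rightarrow> nat"
  assumes "\<forall>k\<in>set_pmf K. length k = N"
    and "\<forall>i\<in>{1..d}. p i \<in> {1..N}"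
  shows "measure_pmf.expectation (pmf_of_set (Pow {1..d})) (dS K p)
    \<le> (1/2) * sqrt (\<Sum>y\<in>{ys::bool list. length ys = d}.
                       (measure_pmf.prob K {k. probe_vec p d k = y})\<^sup>2)"
proof -
  define W where "W = walsh_coeff d (pmf (map_pmf (probe_vec p d) K))"
  have card_subsets: "card (Pow {1..d}) = (2::real) ^ d"
    by (simp add: card_Pow)
  have "measure_pmf.expectation (pmf_of_set (Pow {1..d})) (dS K p)
      = (\<Sum>S\<in>Pow {1..d}. dS K p S) / card (Pow {1..d})"
    by (rule integral_pmf_of_set) auto
  also have "\<dots> = (\<Sum>S\<in>Pow {1..d}. \<bar>W S\<bar>) / card (Pow {1..d}) / 2"
    by (simp add: dS_eq_walsh_coeff W_def sum_divide_distrib mult.commute)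
  also have "\<dots> \<le> sqrt ((\<Sum>S\<in>Pow {1..d}. (W S)\<^sup>2) / card (Pow {1..d})) / 2"
    by (intro divide_right_mono mean_abs_le_sqrt_mean_square) auto
  also have "\<dots> = (1/2) * sqrt (\<Sum>y\<in>{ys. length ys = d}.
                                 (measure_pmf.prob K {k. probe_vec p d k = y})\<^sup>2)"
    unfolding W_def parseval_walsh card_subsets by (simp add: pmf_map vimage_def)
  finally show ?thesis .
qed

end
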